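(* Let $r \ge 3$ and $2 \le k \le r$ be integers and let $n \ge 2\binom{2k-1}{k}^{-1}(r-k)r^{k+1}$. Let $\mathcal{H}$ be an intersecting $r$-uniform $n$-vertex hypergraph with $\delta_{r-1}^+(\mathcal{H}) \ge k$ having the maximum number of hyperedges among all intersecting $r$-uniform $n$-vertex hypergraphs with minimum positive co-degree at least $k$. Then $\tau(\mathcal{H}) = k$.
   Context: A hypergraph is intersecting if every two of its hyperedges share at least one vertex. For a non-empty $r$-uniform hypergraph $\mathcal{H}$, the minimum positive co-degree $\delta_{r-1}^+(\mathcal{H})$ is the largest integer $k$ such that every $(r-1)$-set of vertices that is contained in at least one hyperedge of $\mathcal{H}$ is contained in at least $k$ distinct hyperedges of $\mathcal{H}$; for the empty hypergraph it is $0$. A transversal of $\mathcal{H}$ is a set of vertices meeting every hyperedge, and $\tau(\mathcal{H})$ is the minimum size of a transversal. *)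

theory Defs
  imports Complex_Main
begin

definition uniform_hg :: "nat \<Rightarrow> 'a set \<Rightarrow> 'a set set \<Rightarrow> bool" where
  "uniform_hg r V H \<longleftrightarrow> (\<forall>e\<in>H. e \<subseteq> V \<and> card e = r)"

definition intersecting :: "'a set set \<Rightarrow> bool" where
  "intersecting H \<longleftrightarrow> (\<forall>e\<in>H. \<forall>f\<in>H. e \<inter> f \<noteq> {})"

definition codeg :: "'a set set \<Rightarrow> 'a set \<Rightarrow> nat" where
  "codeg H S = card {e\<in>H. S \<subseteq> e}"

text \<open>Minimum positive co-degree (0 for the empty hypergraph).\<close>
definition min_pos_codeg :: "nat \<Rightarrow> 'a set set \<Rightarrow> nat" where
  "min_pos_codeg r H =
     (if H = {} then 0
      else Min {codeg H S | S. card S = r - 1 \<and> (\<exists>e\<in>H. S \<subseteq> e)})"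

definition is_transversal :: "'a set \<Rightarrow> 'a set set \<Rightarrow> 'a set \<Rightarrow> bool" where
  "is_transversal V H T \<longleftrightarrow> T \<subseteq> V \<and> (\<forall>e\<in>H. T \<inter> e \<noteq> {})"

definition tau :: "'a set \<Rightarrow> 'a set set \<Rightarrow> nat" where
  "tau V H = (LEAST t. \<exists>T. is_transversal V H T \<and> card T = t)"

end

theory Submission
  imports Defs
begin

text \<open>
  Positive co-degree at least \<open>k\<close> forces \<open>\<tau> \<ge> k\<close>: if a transversal \<open>T\<close> had fewer than \<open>k\<close>
  vertices, an edge meeting \<open>T\<close> could be traded, one vertex at a time, for edges meeting \<open>T\<close> in
  fewer vertices, until one misses \<open>T\<close>. Conversely, if \<open>\<tau> > k\<close>, branching on the vertices of an
  edge disjoint from the current partial set \<open>k + 1\<close> times shows that there are at most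
  \<open>r^(k+1) C(n-k-1, r-k-1)\<close> edges. The \<open>r\<close>-sets meeting a fixed \<open>(2k-1)\<close>-set \<open>A\<close> in at least \<open>k\<close>
  vertices form an intersecting family of minimum positive co-degree \<open>k\<close> with at least
  \<open>C(2k-1, k) C(n-2k+1, r-k)\<close> edges, which is more for \<open>n\<close> above the threshold, contradicting
  the maximality of \<open>H\<close>.
\<close>

lemma uniform_hg_finite:
  assumes "finite V" "uniform_hg r V H"
  shows "finite H"
proof (rule finite_subset)
  show "H \<subseteq> Pow V"
    using assms(2) unfolding uniform_hg_def by auto
qed (use assms(1) in simp)

lemma uniform_hg_edge:
  assumes "uniform_hg r V H" "finite V" "e \<in> H"
  shows "e \<subseteq> V" "card e = r" "finite e"
  using assms unfolding uniform_hg_def by (auto intro: finite_subset)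

lemma codeg_ge_if_min_pos_codeg_ge:
  assumes "finite H" "min_pos_codeg r H \<ge> k" "e \<in> H" "S \<subseteq> e" "card S = r - 1"
  shows "k \<le> codeg H S"
proof -
  let ?Q = "{codeg H S | S. card S = r - 1 \<and> (\<exists>e\<in>H. S \<subseteq> e)}"
  have "?Q \<subseteq> {..card H}"
    unfolding codeg_def using \<open>finite H\<close> by (auto intro: card_mono)
  then have "finite ?Q"
    by (rule finite_subset) simp
  then have "Min ?Q \<le> codeg H S"
    using assms(3-5) by (intro Min_le) auto
  moreover have "min_pos_codeg r H = Min ?Q"
    using assms(3) unfolding min_pos_codeg_def by auto
  ultimately show ?thesis
    using assms(2) by linarith
qed

lemma min_pos_codeg_geI:
  assumes "finite V" "uniform_hg r V H" "H \<noteq> {}"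
    and "\<And>e S. e \<in> H \<Longrightarrow> S \<subseteq> e \<Longrightarrow> card S = r - 1 \<Longrightarrow> k \<le> codeg H S"
  shows "k \<le> min_pos_codeg r H"
proof -
  let ?Q = "{codeg H S | S. card S = r - 1 \<and> (\<exists>e\<in>H. S \<subseteq> e)}"
  have "?Q \<subseteq> {..card H}"
    unfolding codeg_def using uniform_hg_finite[OF assms(1,2)] by (auto intro: card_mono)
  then have "finite ?Q"
    by (rule finite_subset) simp
  obtain e where "e \<in> H"
    using assms(3) by blast
  then have "r - 1 \<le> card e"
    using uniform_hg_edge[OF assms(2,1)] by simp
  then obtain S where "S \<subseteq> e" "card S = r - 1"
    by (rule obtain_subset_with_card_n)
  then have "?Q \<noteq> {}"
    using \<open>e \<in> H\<close> by blast
  moreover have "\<forall>q\<in>?Q. k \<le> q"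
    using assms(4) by blast
  ultimately have "k \<le> Min ?Q"
    using \<open>finite ?Q\<close> by simp
  then show ?thesis
    using assms(3) unfolding min_pos_codeg_def by simp
qed

lemma card_le_codeg:
  assumes "finite H" "finite X" "X \<inter> S = {}" "\<And>x. x \<in> X \<Longrightarrow> insert x S \<in> H"
  shows "card X \<le> codeg H S"
  unfolding codeg_def
proof (rule card_inj_on_le)
  show "inj_on (\<lambda>x. insert x S) X"
    using assms(3) by (auto simp: inj_on_def insert_ident)
qed (use assms in auto)

lemma edge_is_transversal:
  assumes "uniform_hg r V H" "intersecting H" "e \<in> H"
  shows "is_transversal V H e"
  using assms unfolding uniform_hg_def intersecting_def is_transversal_def by blast

lemma tau_le_card:
  assumes "is_transversal V H T"
  shows "tau V H \<le> card T"
  unfolding tau_def using assms by (blast intro: Least_le)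

lemma tau_attained:
  assumes "is_transversal V H T"
  obtains T' where "is_transversal V H T'" "card T' = tau V H"
  using LeastI[of "\<lambda>t. \<exists>T. is_transversal V H T \<and> card T = t" "card T"] assms
  unfolding tau_def by blast

text \<open>Of the at least \<open>k > |T|\<close> edges through \<open>e - {t}\<close>, at most \<open>|T|\<close> have their remaining
  vertex in \<open>T\<close>.\<close>
lemma exchange_vertex_of_transversal:
  assumes "finite V" "uniform_hg r V H" "r \<ge> 1"
    and "k \<le> min_pos_codeg r H" "finite T" "card T < k" "e \<in> H" "t \<in> e \<inter> T"
  obtains e' where "e' \<in> H" "e' \<inter> T = e \<inter> T - {t}"
proof -
  define S where "S = e - {t}"
  define E where "E = {e'\<in>H. S \<subseteq> e'}"
  have "finite e" "card e = r"
    using uniform_hg_edge[OF assms(2,1,7)] by auto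
  then have "card S = r - 1" "finite S"
    using assms(8) unfolding S_def by auto
  then have "k \<le> card E"
    using codeg_ge_if_min_pos_codeg_ge[OF uniform_hg_finite[OF assms(1,2)] assms(4,7)]
    unfolding codeg_def E_def S_def by blast
  have new_vertex: "\<exists>x. e' = insert x S" if "e' \<in> E" for e'
  proof -
    have "card e' = r" "S \<subseteq> e'"
      using that uniform_hg_edge[OF assms(2,1)] unfolding E_def by auto
    then have "card (e' - S) = 1"
      using \<open>card S = r - 1\<close> \<open>finite S\<close> \<open>r \<ge> 1\<close> by (simp add: card_Diff_subset)
    then obtain x where "e' - S = {x}"
      by (rule card_1_singletonE)
    then show ?thesis
      using \<open>S \<subseteq> e'\<close> by blast
  qed
  have "\<exists>e'\<in>E. e' \<inter> T \<subseteq> S"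
  proof (rule ccontr)
    assume no_edge: "\<not> (\<exists>e'\<in>E. e' \<inter> T \<subseteq> S)"
    have "E \<subseteq> (\<lambda>x. insert x S) ` T"
    proof
      fix e' assume "e' \<in> E"
      obtain x where x: "e' = insert x S"
        using new_vertex[OF \<open>e' \<in> E\<close>] by blast
      then have "x \<in> T"
        using no_edge \<open>e' \<in> E\<close> by auto
      then show "e' \<in> (\<lambda>x. insert x S) ` T"
        using x by blast
    qed
    then have "card E \<le> card T"
      using \<open>finite T\<close> by (intro surj_card_le)
    then show False
      using \<open>k \<le> card E\<close> \<open>card T < k\<close> by linarith
  qed
  then obtain e' where "e' \<in> H" "S \<subseteq> e'" "e' \<inter> T \<subseteq> S"
    unfolding E_def by blast
  then have "e' \<inter> T = e \<inter> T - {t}"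
    unfolding S_def by blast
  with \<open>e' \<in> H\<close> show ?thesis
    by (rule that)
qed

lemma card_transversal_ge_min_pos_codeg:
  assumes "finite V" "uniform_hg r V H" "r \<ge> 1" "k \<le> min_pos_codeg r H" "H \<noteq> {}"
    and T: "is_transversal V H T"
  shows "k \<le> card T"
proof (rule ccontr)
  assume "\<not> k \<le> card T"
  have "finite T"
    using T \<open>finite V\<close> unfolding is_transversal_def by (auto intro: finite_subset)
  obtain e where e: "e \<in> H" and least: "\<forall>e'\<in>H. card (e \<inter> T) \<le> card (e' \<inter> T)"
    using ex_has_least_nat[of "\<lambda>e. e \<in> H" _ "\<lambda>e. card (e \<inter> T)"] assms(5) by blast
  obtain t where "t \<in> e \<inter> T"
    using T e unfolding is_transversal_def by blast
  moreover have "card T < k"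
    using \<open>\<not> k \<le> card T\<close> by simp
  ultimately obtain e' where "e' \<in> H" "e' \<inter> T = e \<inter> T - {t}"
    using exchange_vertex_of_transversal[OF assms(1-4) \<open>finite T\<close> _ e] by blast
  moreover have "card (e \<inter> T - {t}) < card (e \<inter> T)"
    using \<open>t \<in> e \<inter> T\<close> \<open>finite T\<close> by (intro card_Diff1_less) auto
  ultimately show False
    using least by (metis not_le)
qed

lemma min_pos_codeg_le_tau:
  assumes "finite V" "uniform_hg r V H" "intersecting H" "r \<ge> 1" "H \<noteq> {}"
  shows "min_pos_codeg r H \<le> tau V H"
proof -
  obtain e where "e \<in> H"
    using assms(5) by blast
  then have "is_transversal V H e"
    by (rule edge_is_transversal[OF assms(2,3)])
  then obtain T where "is_transversal V H T" "card T = tau V H"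
    by (rule tau_attained)
  then show ?thesis
    using card_transversal_ge_min_pos_codeg[OF assms(1,2,4) order_refl assms(5)] by metis
qed

lemma card_edges_containing_le_choose:
  assumes "finite V" "card V = n" "uniform_hg r V H" "S \<subseteq> V" "card S = j"
  shows "card {e\<in>H. S \<subseteq> e} \<le> (n - j) choose (r - j)"
proof -
  have "finite S"
    using assms(1,4) by (rule finite_subset[rotated])
  have "card {e\<in>H. S \<subseteq> e} \<le> card {B. B \<subseteq> V - S \<and> card B = r - j}"
  proof (rule card_inj_on_le)
    show "inj_on (\<lambda>e. e - S) {e\<in>H. S \<subseteq> e}"
      by (rule inj_onI) blast
    show "(\<lambda>e. e - S) ` {e\<in>H. S \<subseteq> e} \<subseteq> {B. B \<subseteq> V - S \<and> card B = r - j}"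
      using uniform_hg_edge[OF assms(3,1)] \<open>finite S\<close> assms(5)
      by (auto simp: card_Diff_subset)
    show "finite {B. B \<subseteq> V - S \<and> card B = r - j}"
      using assms(1) by simp
  qed
  also have "\<dots> = (n - j) choose (r - j)"
    using n_subsets[of "V - S" "r - j"] assms \<open>finite S\<close> by (simp add: card_Diff_subset)
  finally show ?thesis .
qed

text \<open>An edge \<open>f\<close> disjoint from \<open>S\<close> exists as long as \<open>|S| < \<tau>\<close>, and every edge
  through \<open>S\<close> also passes through one of the \<open>r\<close> vertices of \<open>f\<close>.\<close>
lemma card_edges_containing_le:
  assumes "finite V" "card V = n" "uniform_hg r V H" "intersecting H" "K \<le> tau V H"
  shows "S \<subseteq> V \<Longrightarrow> card S = j \<Longrightarrow> j + m \<le> K \<Longrightarrow>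
    card {e\<in>H. S \<subseteq> e} \<le> r ^ m * ((n - (j + m)) choose (r - (j + m)))"
proof (induction m arbitrary: S j)
  case 0
  then show ?case
    using card_edges_containing_le_choose[OF assms(1-3)] by simp
next
  case (Suc m)
  have "\<not> is_transversal V H S"
    using tau_le_card[of V H S] Suc.prems assms(5) by linarith
  then obtain f where f: "f \<in> H" "S \<inter> f = {}"
    using Suc.prems(1) unfolding is_transversal_def by blast
  have "f \<subseteq> V" "card f = r" "finite f"
    using uniform_hg_edge[OF assms(3,1) f(1)] by auto
  have "finite S"
    using Suc.prems(1) assms(1) by (rule finite_subset)
  have "{e\<in>H. S \<subseteq> e} \<subseteq> (\<Union>v\<in>f. {e\<in>H. insert v S \<subseteq> e})"
  proof
    fix e assume e: "e \<in> {e\<in>H. S \<subseteq> e}"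
    then obtain v where "v \<in> e" "v \<in> f"
      using f(1) assms(4) unfolding intersecting_def by blast
    with e show "e \<in> (\<Union>v\<in>f. {e\<in>H. insert v S \<subseteq> e})"
      by blast
  qed
  then have "card {e\<in>H. S \<subseteq> e} \<le> card (\<Union>v\<in>f. {e\<in>H. insert v S \<subseteq> e})"
    using uniform_hg_finite[OF assms(1,3)] \<open>finite f\<close> by (intro card_mono) auto
  also have "\<dots> \<le> (\<Sum>v\<in>f. card {e\<in>H. insert v S \<subseteq> e})"
    by (rule card_UN_le[OF \<open>finite f\<close>])
  also have "\<dots> \<le> (\<Sum>v\<in>f. r ^ m * ((n - (Suc j + m)) choose (r - (Suc j + m))))"
  proof (rule sum_mono)
    fix v assume "v \<in> f"
    then have "v \<notin> S" "insert v S \<subseteq> V"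
      using f(2) \<open>f \<subseteq> V\<close> Suc.prems(1) by auto
    moreover from \<open>v \<notin> S\<close> have "card (insert v S) = Suc j"
      using Suc.prems(2) \<open>finite S\<close> by simp
    moreover have "Suc j + m \<le> K"
      using Suc.prems(3) by simp
    ultimately show "card {e\<in>H. insert v S \<subseteq> e} \<le> r ^ m * ((n - (Suc j + m)) choose (r - (Suc j + m)))"
      using Suc.IH by blast
  qed
  also have "\<dots> = r ^ Suc m * ((n - (j + Suc m)) choose (r - (j + Suc m)))"
    using \<open>card f = r\<close> by simp
  finally show ?case .
qed

corollary card_le_if_tau_ge:
  assumes "finite V" "card V = n" "uniform_hg r V H" "intersecting H" "K \<le> tau V H"
  shows "card H \<le> r ^ K * ((n - K) choose (r - K))"
  using card_edges_containing_le[OF assms, of "{}" 0 K] by simp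

definition majority_family :: "nat \<Rightarrow> 'a set \<Rightarrow> 'a set \<Rightarrow> nat \<Rightarrow> 'a set set" where
  "majority_family r V A k = {e. e \<subseteq> V \<and> card e = r \<and> k \<le> card (e \<inter> A)}"

lemma majority_family_uniform: "uniform_hg r V (majority_family r V A k)"
  unfolding uniform_hg_def majority_family_def by auto

lemma majority_family_intersecting:
  assumes "finite A" "card A < 2 * k"
  shows "intersecting (majority_family r V A k)"
  unfolding intersecting_def
proof (intro ballI notI)
  fix e f
  assume "e \<in> majority_family r V A k" "f \<in> majority_family r V A k" "e \<inter> f = {}"
  then have "card (e \<inter> A) + card (f \<inter> A) = card (e \<inter> A \<union> f \<inter> A)"
    using assms(1) by (intro card_Un_disjoint[symmetric]) auto
  also have "\<dots> \<le> card A"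
    using assms(1) by (intro card_mono) auto
  finally show False
    using \<open>e \<in> _\<close> \<open>f \<in> _\<close> assms(2) unfolding majority_family_def by simp
qed

lemma card_majority_family_ge:
  assumes "finite V" "card V = n" "A \<subseteq> V" "k \<le> r"
  shows "(card A choose k) * ((n - card A) choose (r - k)) \<le> card (majority_family r V A k)"
proof -
  let ?K = "{K. K \<subseteq> A \<and> card K = k}" and ?B = "{B. B \<subseteq> V - A \<and> card B = r - k}"
  have "finite A"
    using assms(1,3) by (rule finite_subset[rotated])
  have "card (?K \<times> ?B) \<le> card (majority_family r V A k)"
  proof (rule card_inj_on_le)
    show "inj_on (\<lambda>(K, B). K \<union> B) (?K \<times> ?B)"
    proof (rule inj_onI, clarify)
      fix K B K' B'
      assume "K \<subseteq> A" "B \<subseteq> V - A" "K' \<subseteq> A" "B' \<subseteq> V - A" "K \<union> B = K' \<union> B'"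
      then have "K = (K' \<union> B') \<inter> A" "K' = (K' \<union> B') \<inter> A" "B = (K' \<union> B') - A" "B' = (K' \<union> B') - A"
        by blast+
      then show "K = K' \<and> B = B'"
        by simp
    qed
    show "(\<lambda>(K, B). K \<union> B) ` (?K \<times> ?B) \<subseteq> majority_family r V A k"
    proof
      fix z
      assume "z \<in> (\<lambda>(K, B). K \<union> B) ` (?K \<times> ?B)"
      then obtain K B where KB: "K \<subseteq> A" "card K = k" "B \<subseteq> V - A" "card B = r - k"
        and z: "z = K \<union> B"
        by blast
      have "finite K" "finite B"
        using finite_subset[OF KB(1) \<open>finite A\<close>] finite_subset[of B V] KB(3) assms(1) by auto
      then have "card (K \<union> B) = r"
        using KB assms(4) by (subst card_Un_disjoint) auto
      moreover have "(K \<union> B) \<inter> A = K"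
        using KB by auto
      ultimately show "z \<in> majority_family r V A k"
        using KB assms(3) unfolding majority_family_def z by auto
    qed
    show "finite (majority_family r V A k)"
      using uniform_hg_finite[OF assms(1) majority_family_uniform] .
  qed
  moreover have "card (?K \<times> ?B) = (card A choose k) * ((n - card A) choose (r - k))"
    using n_subsets[OF \<open>finite A\<close>, of k] n_subsets[of "V - A" "r - k"] assms \<open>finite A\<close>
    by (simp add: card_cartesian_product card_Diff_subset)
  ultimately show ?thesis
    by simp
qed

text \<open>An \<open>(r-1)\<close>-set \<open>S\<close> inside an edge meets \<open>A\<close> in at least \<open>k - 1\<close> vertices. If it meets
  \<open>A\<close> in \<open>k\<close> or more, any further vertex completes it to an edge; otherwise any vertex of
  \<open>A - S\<close> does.\<close>
lemma min_pos_codeg_majority_family_ge: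
  assumes "finite V" "card V = n" "A \<subseteq> V" "2 * k \<le> card A + 1" "1 \<le> k" "k \<le> r" "r + k \<le> n + 1"
    and "majority_family r V A k \<noteq> {}"
  shows "k \<le> min_pos_codeg r (majority_family r V A k)"
proof (rule min_pos_codeg_geI[OF assms(1) majority_family_uniform assms(8)])
  fix e S
  assume "e \<in> majority_family r V A k" "S \<subseteq> e" "card S = r - 1"
  let ?G = "majority_family r V A k"
  have finG: "finite ?G"
    using uniform_hg_finite[OF assms(1) majority_family_uniform] .
  have e: "e \<subseteq> V" "card e = r" "k \<le> card (e \<inter> A)"
    using \<open>e \<in> majority_family r V A k\<close> unfolding majority_family_def by auto
  then have "S \<subseteq> V" "finite S"
    using assms(1) \<open>S \<subseteq> e\<close> finite_subset[of S V] by auto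
  have "finite A"
    using assms(1,3) by (rule finite_subset[rotated])
  have insert_card: "card (insert x S) = r" if "x \<notin> S" for x
    using that \<open>finite S\<close> assms(5,6) \<open>card S = r - 1\<close> by simp
  have "card (e - S) = 1"
    using \<open>finite S\<close> assms(5,6) \<open>S \<subseteq> e\<close> \<open>card S = r - 1\<close> e(2) by (simp add: card_Diff_subset)
  then obtain t where "e - S = {t}"
    by (rule card_1_singletonE)
  then have "card (e \<inter> A) \<le> card (insert t (S \<inter> A))"
    using \<open>finite S\<close> by (intro card_mono) auto
  also have "\<dots> \<le> Suc (card (S \<inter> A))"
    by (rule card_insert_le_m1) simp_all
  finally have "k \<le> Suc (card (S \<inter> A))"
    using e(3) by linarith
  then consider "k \<le> card (S \<inter> A)" | "card (S \<inter> A) = k - 1"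
    by linarith
  then show "k \<le> codeg ?G S"
  proof cases
    case 1
    have "k \<le> card (V - S)"
      using \<open>S \<subseteq> V\<close> \<open>finite S\<close> assms(2,5,6,7) \<open>card S = r - 1\<close> by (simp add: card_Diff_subset)
    also have "\<dots> \<le> codeg ?G S"
    proof (rule card_le_codeg[OF finG])
      fix x assume "x \<in> V - S"
      moreover have "card (S \<inter> A) \<le> card (insert x S \<inter> A)"
        using \<open>finite S\<close> by (intro card_mono) auto
      ultimately show "insert x S \<in> ?G"
        using insert_card[of x] \<open>S \<subseteq> V\<close> 1 unfolding majority_family_def by auto
    qed (use assms(1) in auto)
    finally show ?thesis .
  next
    case 2
    have "k \<le> card (A - S)"
      using 2 assms(4,5) \<open>finite A\<close> by (simp add: card_Diff_subset_Int Int_commute)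
    also have "\<dots> \<le> codeg ?G S"
    proof (rule card_le_codeg[OF finG])
      fix x assume x: "x \<in> A - S"
      then have "card (insert x S \<inter> A) = k"
        using 2 \<open>finite S\<close> assms(5) by (simp add: insert_inter_insert)
      then show "insert x S \<in> ?G"
        using x insert_card[of x] \<open>S \<subseteq> V\<close> assms(3) unfolding majority_family_def by auto
    qed (use \<open>finite A\<close> in auto)
    finally show ?thesis .
  qed
qed

lemma choose_add_Suc_le: "(N + d) choose Suc i \<le> (N choose Suc i) + d * ((N + d) choose i)"
proof (induction d)
  case 0
  show ?case by simp
next
  case (Suc d)
  have mono: "(N + d) choose i \<le> (N + Suc d) choose i"
    by (rule binomial_right_mono) simp
  have "(N + Suc d) choose Suc i = ((N + d) choose i) + ((N + d) choose Suc i)"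
    by simp
  also have "\<dots> \<le> ((N + d) choose i) + (N choose Suc i) + d * ((N + d) choose i)"
    using Suc.IH by simp
  also have "\<dots> \<le> (N choose Suc i) + (((N + Suc d) choose i) + d * ((N + Suc d) choose i))"
    using add_mono[OF mono mult_le_mono2[OF mono, of d]] by linarith
  also have "\<dots> = (N choose Suc i) + Suc d * ((N + Suc d) choose i)"
    by (simp only: mult_Suc)
  finally show ?case .
qed

lemma Suc_mult_choose_Suc: "Suc i * (M choose Suc i) = (M - i) * (M choose i)"
  using binomial_absorption[of i M] binomial_absorb_comp[of M i] by simp

lemma choose_add_mult_le:
  "((N + d) choose j) * (N + d + 1 - j) \<le> (N choose j) * (N + d + 1 - j) + d * j * ((N + d) choose j)"
proof (cases j)
  case 0
  then show ?thesis by simp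
next
  case (Suc i)
  have "((N + d) choose Suc i) * (N + d - i)
      \<le> ((N choose Suc i) + d * ((N + d) choose i)) * (N + d - i)"
    using choose_add_Suc_le mult_le_mono1 by blast
  also have "\<dots> = (N choose Suc i) * (N + d - i) + d * (((N + d) choose i) * (N + d - i))"
    by (simp add: algebra_simps)
  also have "((N + d) choose i) * (N + d - i) = Suc i * ((N + d) choose Suc i)"
    using Suc_mult_choose_Suc[of i "N + d"] by (simp add: mult.commute)
  finally show ?thesis
    using Suc by (simp add: algebra_simps)
qed

lemma choose_odd_le_four_power:
  assumes "1 \<le> k"
  shows "(2 * k - 1) choose k \<le> 4 ^ (k - 1)"
proof -
  define m where "m = k - 1"
  have k: "k = Suc m" "2 * k - 1 = 2 * m + 1"
    using assms unfolding m_def by simp_all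
  have "(2 * m + 1) choose Suc m = (2 * m + 1) choose (2 * m + 1 - Suc m)"
    by (rule binomial_symmetric) simp
  also have "\<dots> = (2 * m + 1) choose m"
    by simp
  also have "\<dots> \<le> (\<Sum>i\<le>m. (2 * m + 1) choose i)"
    by (rule member_le_sum) auto
  also have "\<dots> = 4 ^ m"
    using binomial_r_part_sum[of m] by (simp add: power_mult)
  finally show ?thesis
    unfolding k by simp
qed

lemma ratio_bounds_incompatible:
  fixes x y n p q s :: real
  assumes "x > 0" "2 * (n - p) * x \<le> n * y" "y * (n - q) \<le> x * (n - s)"
    and "2 * p + 2 * q \<le> n" "p \<ge> 0" "q \<ge> 0" "s > 0" "n > 0"
  shows False
proof -
  have "n - q \<ge> 0"
    using assms(4-6) by linarith
  have "x * (2 * (n - p) * (n - q)) = 2 * (n - p) * x * (n - q)"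
    by (simp only: mult_ac)
  also have "\<dots> \<le> n * y * (n - q)"
    using assms(2) \<open>n - q \<ge> 0\<close> by (rule mult_right_mono)
  also have "\<dots> = n * (y * (n - q))"
    by (simp only: mult.assoc)
  also have "\<dots> \<le> n * (x * (n - s))"
    using assms(3,8) by (simp add: mult_left_mono)
  also have "\<dots> = x * (n * (n - s))"
    by (simp only: mult_ac)
  finally have "2 * (n - p) * (n - q) \<le> n * (n - s)"
    using assms(1) by simp
  moreover have "n * (n - 2 * p - 2 * q) \<ge> 0" "p * q \<ge> 0" "n * s > 0"
    using assms(4-8) by simp_all
  ultimately show False
    by (simp add: algebra_simps)
qed

text \<open>Absorption \<open>(j+1) C(N, j+1) = (N-j) C(N, j)\<close> and \<open>choose_add_mult_le\<close> turn the reverse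
  inequality into the two bounds of \<open>ratio_bounds_incompatible\<close>, with \<open>n = N + 2d + 3\<close>.\<close>
lemma choose_shift_lt:
  fixes N d j c R :: nat
  assumes "0 < c" "2 * Suc j * R \<le> c * (N + 2 * d + 3)" "4 * j + 4 * d + 2 * d * j + 7 \<le> N"
  shows "R * ((N + d) choose j) < c * (N choose Suc j)"
proof (rule ccontr)
  assume "\<not> ?thesis"
  then have le: "c * (N choose Suc j) \<le> R * ((N + d) choose j)"
    by simp
  define x y where "x = real (N choose j)" and "y = real ((N + d) choose j)"
  define n p s q where "n = real N + 2 * real d + 3" and "p = real j + 2 * real d + 3"
    and "s = real j + real d + 2" and "q = real j + real d + 2 + real d * real j"
  have "j \<le> N"
    using assms(3) by linarith
  then have "x > 0"
    by (simp add: x_def)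
  have "c * (2 * ((N - j) * (N choose j))) = 2 * Suc j * (c * (N choose Suc j))"
    unfolding Suc_mult_choose_Suc[of j N, symmetric] by (simp only: mult_ac)
  also have "\<dots> \<le> 2 * Suc j * (R * ((N + d) choose j))"
    using le by (rule mult_le_mono2)
  also have "\<dots> = 2 * Suc j * R * ((N + d) choose j)"
    by (simp only: mult.assoc)
  also have "\<dots> \<le> c * (N + 2 * d + 3) * ((N + d) choose j)"
    using assms(2) by (rule mult_le_mono1)
  also have "\<dots> = c * ((N + 2 * d + 3) * ((N + d) choose j))"
    by (simp only: mult.assoc)
  finally have "2 * ((N - j) * (N choose j)) \<le> (N + 2 * d + 3) * ((N + d) choose j)"
    using assms(1) by simp
  then have "real (2 * ((N - j) * (N choose j))) \<le> real ((N + 2 * d + 3) * ((N + d) choose j))"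
    by (rule of_nat_mono)
  moreover have "real (N - j) = n - p" "real (N + 2 * d + 3) = n"
    unfolding n_def p_def using \<open>j \<le> N\<close> by (simp_all add: of_nat_diff)
  ultimately have i1: "2 * (n - p) * x \<le> n * y"
    unfolding x_def y_def by (simp only: of_nat_mult of_nat_numeral mult.assoc)
  have "((N + d) choose j) * (N + d + 1 - j) \<le> (N choose j) * (N + d + 1 - j) + d * j * ((N + d) choose j)"
    by (rule choose_add_mult_le)
  then have "real (((N + d) choose j) * (N + d + 1 - j))
      \<le> real ((N choose j) * (N + d + 1 - j) + d * j * ((N + d) choose j))"
    by (rule of_nat_mono)
  moreover have "real (N + d + 1 - j) = n - s"
    unfolding n_def s_def using \<open>j \<le> N\<close> by (simp add: of_nat_diff)
  ultimately have "y * (n - s) \<le> x * (n - s) + real d * real j * y"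
    unfolding x_def y_def by (simp only: of_nat_mult of_nat_add)
  then have i2: "y * (n - q) \<le> x * (n - s)"
    unfolding q_def s_def by (simp add: algebra_simps)
  have "real (4 * j + 4 * d + 2 * d * j + 7) \<le> real N"
    using assms(3) by (rule of_nat_mono)
  then have "2 * p + 2 * q \<le> n"
    unfolding n_def p_def q_def by simp
  moreover have "p \<ge> 0" "q \<ge> 0" "s > 0" "n > 0"
    unfolding n_def p_def q_def s_def by simp_all
  ultimately show False
    by (rule ratio_bounds_incompatible[OF \<open>x > 0\<close> i1 i2])
qed

lemma threshold_coefficient_le:
  fixes r k :: nat
  assumes "r \<ge> 3" "2 \<le> k" "k < r"
  shows "((2 * k - 1) choose k) * (4 * (r - k - 1) + 4 * (k - 2) + 2 * (k - 2) * (r - k - 1) + 2 * k + 6)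
    \<le> 2 * (r - k) * r ^ (k + 1)"
proof (cases "r = 3")
  case True
  then have "k = 2"
    using assms by simp
  with True show ?thesis
    by (simp add: numeral_eq_Suc)
next
  case False
  define a where "a = r - k"
  have "(2 * k - 1) choose k \<le> 4 ^ (k - 1)"
    using assms(2) by (intro choose_odd_le_four_power) simp
  also have "\<dots> \<le> r ^ (k - 1)"
    using False assms(1) by (intro power_mono) simp_all
  finally have c_le: "(2 * k - 1) choose k \<le> r ^ (k - 1)" .
  have "(k - 2) * (a - 1) \<le> r * a"
    using assms(3) by (intro mult_le_mono) simp_all
  moreover have "r \<le> r * a" "4 * (r * a) \<le> r * (r * a)"
    using assms(3) False assms(1) unfolding a_def by simp_all
  moreover have "4 * a + 6 * k \<le> 6 * r"
    using assms(3) unfolding a_def by simp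
  ultimately have "4 * (a - 1) + 4 * (k - 2) + 2 * ((k - 2) * (a - 1)) + 2 * k + 6 \<le> 2 * (r * (r * a))"
    using assms(2) by linarith
  moreover have "r - k - 1 = a - 1"
    unfolding a_def by simp
  ultimately have "4 * (r - k - 1) + 4 * (k - 2) + 2 * (k - 2) * (r - k - 1) + 2 * k + 6 \<le> 2 * a * r ^ 2"
    by (simp only: power2_eq_square mult_ac)
  then have "((2 * k - 1) choose k) * (4 * (r - k - 1) + 4 * (k - 2) + 2 * (k - 2) * (r - k - 1) + 2 * k + 6)
      \<le> r ^ (k - 1) * (2 * a * r ^ 2)"
    using c_le by (rule mult_le_mono[rotated])
  also have "\<dots> = 2 * (r - k) * r ^ (k + 1)"
    using assms(2) unfolding a_def by (simp flip: power_add)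
  finally show ?thesis .
qed

lemma threshold_implies_large:
  fixes r k n :: nat
  assumes "r \<ge> 3" "2 \<le> k" "k < r"
    and "real n \<ge> 2 * real (r - k) * real r ^ (k + 1) / real ((2 * k - 1) choose k)"
  shows "2 * (r - k) * r ^ (k + 1) \<le> ((2 * k - 1) choose k) * n"
    and "4 * (r - k - 1) + 4 * (k - 2) + 2 * (k - 2) * (r - k - 1) + 2 * k + 6 \<le> n"
proof -
  have "0 < (2 * k - 1) choose k"
    by simp
  then have "real (2 * (r - k) * r ^ (k + 1)) \<le> real (((2 * k - 1) choose k) * n)"
    using assms(4) by (simp add: pos_divide_le_eq mult.commute)
  then show le: "2 * (r - k) * r ^ (k + 1) \<le> ((2 * k - 1) choose k) * n"
    by (simp only: of_nat_le_iff)
  show "4 * (r - k - 1) + 4 * (k - 2) + 2 * (k - 2) * (r - k - 1) + 2 * k + 6 \<le> n"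
    using order_trans[OF threshold_coefficient_le[OF assms(1-3)] le] \<open>0 < _\<close>
    by (simp only: mult_le_cancel1)
qed

lemma branching_bound_lt_majority_bound:
  fixes r k n :: nat
  assumes "r \<ge> 3" "2 \<le> k" "k < r"
    and "real n \<ge> 2 * real (r - k) * real r ^ (k + 1) / real ((2 * k - 1) choose k)"
  shows "r ^ (k + 1) * ((n - (k + 1)) choose (r - (k + 1)))
    < ((2 * k - 1) choose k) * ((n - (2 * k - 1)) choose (r - k))"
proof -
  define N d j where "N = n - (2 * k - 1)" and "d = k - 2" and "j = r - k - 1"
  note large = threshold_implies_large[OF assms]
  have n: "n = N + 2 * d + 3" "n - (k + 1) = N + d"
    using large(2) assms(2) unfolding N_def d_def by linarith+
  have r: "r - (k + 1) = j" "r - k = Suc j"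
    using assms(3) unfolding j_def by linarith+
  have "2 * Suc j * r ^ (k + 1) \<le> ((2 * k - 1) choose k) * (N + 2 * d + 3)"
    using large(1) unfolding n(1)[symmetric] r(2)[symmetric] .
  moreover have "4 * j + 4 * d + 2 * d * j + 7 \<le> N"
    using large(2) assms(2,3) unfolding N_def d_def j_def by linarith
  ultimately show ?thesis
    unfolding n(2) r N_def[symmetric] by (intro choose_shift_lt) simp_all
qed

lemma exists_large_majority_family:
  assumes "r \<ge> 3" "2 \<le> k" "k < r" "finite V" "card V = n"
    and "real n \<ge> 2 * real (r - k) * real r ^ (k + 1) / real ((2 * k - 1) choose k)"
  obtains G where "uniform_hg r V G" "intersecting G" "k \<le> min_pos_codeg r G"
    "((2 * k - 1) choose k) * ((n - (2 * k - 1)) choose (r - k)) \<le> card G"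
proof -
  note large = threshold_implies_large[OF assms(1-3,6)]
  have "2 * k - 1 \<le> card V"
    using large(2) assms(5) by linarith
  then obtain A where A: "A \<subseteq> V" "card A = 2 * k - 1"
    by (rule obtain_subset_with_card_n)
  let ?G = "majority_family r V A k"
  have card_G: "((2 * k - 1) choose k) * ((n - (2 * k - 1)) choose (r - k)) \<le> card ?G"
    using card_majority_family_ge[OF assms(4,5) A(1), of k r] A(2) assms(3) by simp
  moreover have "k \<le> 2 * k - 1" "r - k \<le> n - (2 * k - 1)"
    using large(2) assms(2,3) by linarith+
  then have "0 < ((2 * k - 1) choose k) * ((n - (2 * k - 1)) choose (r - k))"
    by simp
  ultimately have "?G \<noteq> {}"
    by auto
  then have "k \<le> min_pos_codeg r ?G"
    using large(2) assms(2,3) A by (intro min_pos_codeg_majority_family_ge[OF assms(4,5)]) auto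
  moreover have "intersecting ?G"
    using finite_subset[OF A(1) assms(4)] A(2) assms(2) by (intro majority_family_intersecting) simp_all
  ultimately show ?thesis
    using that majority_family_uniform card_G by blast
qed

theorem lemma8:
  fixes V :: "'a set" and H :: "'a set set" and r k n :: nat
  assumes "r \<ge> 3" and "2 \<le> k" and "k \<le> r"
    and "finite V" and "card V = n"
    and "real n \<ge> 2 * real (r - k) * real r ^ (k + 1) / real ((2 * k - 1) choose k)"
    and "uniform_hg r V H" and "intersecting H" and "min_pos_codeg r H \<ge> k"
    and "\<forall>H'. uniform_hg r V H' \<and> intersecting H' \<and> min_pos_codeg r H' \<ge> k
              \<longrightarrow> card H' \<le> card H"
  shows "tau V H = k"
proof -
  have "H \<noteq> {}"
    using assms(2,9) unfolding min_pos_codeg_def by auto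
  then have "k \<le> tau V H"
    using min_pos_codeg_le_tau[OF assms(4,7,8)] assms(1,9) by fastforce
  moreover have "\<not> k + 1 \<le> tau V H"
  proof
    assume tau: "k + 1 \<le> tau V H"
    obtain e where "e \<in> H"
      using \<open>H \<noteq> {}\<close> by blast
    then have "k < r"
      using tau tau_le_card[OF edge_is_transversal[OF assms(7,8)]] uniform_hg_edge(2)[OF assms(7,4)]
      by fastforce
    obtain G where G: "uniform_hg r V G" "intersecting G" "k \<le> min_pos_codeg r G"
      and card_G: "((2 * k - 1) choose k) * ((n - (2 * k - 1)) choose (r - k)) \<le> card G"
      by (rule exists_large_majority_family[OF assms(1,2) \<open>k < r\<close> assms(4-6)])
    have "card H \<le> r ^ (k + 1) * ((n - (k + 1)) choose (r - (k + 1)))"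
      by (rule card_le_if_tau_ge[OF assms(4,5,7,8) tau])
    also have "\<dots> < ((2 * k - 1) choose k) * ((n - (2 * k - 1)) choose (r - k))"
      by (rule branching_bound_lt_majority_bound[OF assms(1,2) \<open>k < r\<close> assms(6)])
    finally show False
      using card_G assms(10) G by fastforce
  qed
  ultimately show ?thesis
    by simp
qed

end
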